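(* Let $\tilde w\in\mathbb{R}^{r_k\times n_k}$ with $r_k\le n_k$ be entrywise nonnegative, of full rank, with each column summing to $1$. Let $\sigma_1$ be its largest singular value and $z_{\max}$ its maximal row sum. Then (1) $n_k/r_k\le\sigma_1^2\le z_{\max}$; (2) $\sigma_1^2=n_k/r_k$ if and only if all row sums of $\tilde w$ are equal, i.e. $z_{\max}=n_k/r_k$. *)

theory Defs
  imports "HOL-Analysis.Analysis"
begin

definition mat_eigenvalue :: "real^'n^'n \<Rightarrow> real \<Rightarrow> bool" where
  "mat_eigenvalue A l \<longleftrightarrow> (\<exists>v. v \<noteq> 0 \<and> A *v v = l *\<^sub>R v)"

definition singular_values :: "real^'n^'m \<Rightarrow> real set" where
  "singular_values W = {sqrt l | l. mat_eigenvalue (transpose W ** W) l}"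

definition largest_singular_value :: "real^'n^'m \<Rightarrow> real" where
  "largest_singular_value W = Max (singular_values W)"

definition row_sum :: "real^'n^'m \<Rightarrow> 'm \<Rightarrow> real" where
  "row_sum W i = (\<Sum>j\<in>UNIV. W $ i $ j)"

definition max_row_sum :: "real^'n^'m \<Rightarrow> real" where
  "max_row_sum W = Max (range (row_sum W))"

end

theory Submission
  imports Defs
begin

text \<open>The square of the largest singular value is the maximum of the Rayleigh quotient
  \<open>|W x|\<^sup>2 / |x|\<^sup>2\<close>, attained at an eigenvector of \<open>W\<^sup>T W\<close>. For nonnegative \<open>W\<close> with unit
  column sums, Cauchy-Schwarz on each row gives \<open>|W x|\<^sup>2 \<le> z\<^sub>m\<^sub>a\<^sub>x |x|\<^sup>2\<close>. Testing the
  quotient on the all-ones vector gives \<open>\<Sum> z\<^sub>i\<^sup>2 \<le> \<sigma>\<^sub>1\<^sup>2 n\<close>, while \<open>\<Sum> z\<^sub>i = n\<close> and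
  Cauchy-Schwarz give \<open>n\<^sup>2 / r \<le> \<Sum> z\<^sub>i\<^sup>2\<close>. If \<open>\<sigma>\<^sub>1\<^sup>2 = n / r\<close>, the last inequality is
  tight, so all row sums are equal, hence equal to \<open>n / r\<close>; and \<open>z\<^sub>m\<^sub>a\<^sub>x = n / r\<close> squeezes
  \<open>\<sigma>\<^sub>1\<^sup>2\<close> between \<open>n / r\<close> and \<open>z\<^sub>m\<^sub>a\<^sub>x\<close>.\<close>

lemma nonneg_quadratic_linear_coeff_eq_0:
  fixes a b :: real
  assumes "\<And>t. 0 \<le> a * t + b * t\<^sup>2"
  shows "a = 0"
proof -
  define c where "c = \<bar>b\<bar> + 1"
  define t where "t = - a / c"
  have "c > 0" by (simp add: c_def)
  then have ct: "c * t = - a" by (simp add: t_def)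
  have "a * t + b * t\<^sup>2 \<le> a * t + c * t\<^sup>2 - t\<^sup>2"
    using mult_right_mono[OF abs_ge_self zero_le_power2] by (simp add: c_def algebra_simps)
  also have "\<dots> = t * (a + c * t) - t\<^sup>2"
    by (simp add: power2_eq_square algebra_simps)
  also have "\<dots> = - t\<^sup>2"
    using ct by simp
  finally have "t\<^sup>2 \<le> 0"
    using assms[of t] by linarith
  then show ?thesis
    using \<open>c > 0\<close> by (simp add: t_def)
qed

lemma inner_matrix_vector_mult_symmetric:
  fixes A :: "real^'n^'n"
  assumes "transpose A = A"
  shows "u \<bullet> (A *v v) = (A *v u) \<bullet> v"
  by (metis assms dot_lmul_matrix transpose_matrix_vector)

lemma eigenvectors_orthogonal_if_symmetric:
  fixes A :: "real^'n^'n"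
  assumes "transpose A = A" "A *v u = a *\<^sub>R u" "A *v v = b *\<^sub>R v" "a \<noteq> b"
  shows "u \<bullet> v = 0"
proof -
  have "b * (u \<bullet> v) = a * (u \<bullet> v)"
    using inner_matrix_vector_mult_symmetric[OF assms(1), of u v] assms(2,3) by simp
  then show ?thesis using assms(4) by simp
qed

lemma finite_eigenvalues_if_symmetric:
  fixes A :: "real^'n^'n"
  assumes sym: "transpose A = A"
  shows "finite {l. mat_eigenvalue A l}"
proof -
  define E where "E = {l. mat_eigenvalue A l}"
  have "\<forall>l\<in>E. \<exists>v. v \<noteq> 0 \<and> A *v v = l *\<^sub>R v"
    by (simp add: E_def mat_eigenvalue_def)
  then obtain v where v: "\<And>l. l \<in> E \<Longrightarrow> v l \<noteq> 0 \<and> A *v v l = l *\<^sub>R v l"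
    by (metis bchoice)
  have orth: "v l \<bullet> v l' = 0" if "l \<in> E" "l' \<in> E" "l \<noteq> l'" for l l'
    using eigenvectors_orthogonal_if_symmetric[OF sym] v that by blast
  have "pairwise orthogonal (v ` E)"
  proof (rule pairwiseI)
    fix x y
    assume "x \<in> v ` E" "y \<in> v ` E" "x \<noteq> y"
    then obtain l l' where "l \<in> E" "l' \<in> E" "l \<noteq> l'" "x = v l" "y = v l'"
      by blast
    then show "orthogonal x y"
      using orth unfolding orthogonal_def by blast
  qed
  moreover have "0 \<notin> v ` E"
    using v by (metis imageE)
  ultimately have "independent (v ` E)"
    by (rule pairwise_orthogonal_independent)
  moreover have "inj_on v E"
  proof (rule inj_onI)
    fix l l'
    assume "l \<in> E" "l' \<in> E" "v l = v l'"
    then show "l = l'"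
      using orth[of l l'] v[of l] by auto
  qed
  ultimately show ?thesis
    unfolding E_def[symmetric] by (metis finite_imageD independent_imp_finite)
qed

lemma inner_Gram_mult:
  fixes W :: "real^'n^'m"
  shows "u \<bullet> ((transpose W ** W) *v v) = (W *v u) \<bullet> (W *v v)"
  by (metis dot_lmul_matrix inner_commute matrix_vector_mul_assoc transpose_matrix_vector)

lemma Gram_symmetric:
  fixes W :: "real^'n^'m"
  shows "transpose (transpose W ** W) = transpose W ** W"
  by (simp add: matrix_transpose_mul)

lemma Gram_eigenvalue_eq:
  fixes W :: "real^'n^'m"
  assumes "(transpose W ** W) *v v = l *\<^sub>R v"
  shows "l * (v \<bullet> v) = (W *v v) \<bullet> (W *v v)"
  using inner_Gram_mult[of v W v] assms by simp

text \<open>The form \<open>\<mu> |y|\<^sup>2 - |W y|\<^sup>2\<close> is nonnegative and vanishes at \<open>x\<close>, so along the residual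
  \<open>g = \<mu> x - W\<^sup>T W x\<close> its linear term \<open>2 |g|\<^sup>2\<close> must vanish.\<close>
lemma Gram_eigenvector_if_attains_bound:
  fixes W :: "real^'n^'m"
  assumes bound: "\<And>y. (W *v y) \<bullet> (W *v y) \<le> \<mu> * (y \<bullet> y)"
    and attained: "(W *v x) \<bullet> (W *v x) = \<mu> * (x \<bullet> x)"
  shows "(transpose W ** W) *v x = \<mu> *\<^sub>R x"
proof -
  define f where "f y = \<mu> * (y \<bullet> y) - (W *v y) \<bullet> (W *v y)" for y
  define g where "g = \<mu> *\<^sub>R x - (transpose W ** W) *v x"
  have lin: "\<mu> * (x \<bullet> g) - (W *v x) \<bullet> (W *v g) = g \<bullet> g"
    using inner_Gram_mult[of g W x] by (simp add: g_def inner_diff_left inner_commute)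
  have "f (x + t *\<^sub>R g) = f x + 2 * (\<mu> * (x \<bullet> g) - (W *v x) \<bullet> (W *v g)) * t + f g * t\<^sup>2"
    for t
    by (simp add: f_def matrix_vector_right_distrib matrix_vector_mult_scaleR
        inner_add_left inner_add_right inner_commute power2_eq_square algebra_simps)
  then have "f (x + t *\<^sub>R g) = 2 * (g \<bullet> g) * t + f g * t\<^sup>2" for t
    using attained lin by (simp add: f_def)
  moreover have "f y \<ge> 0" for y
    using bound[of y] by (simp add: f_def)
  ultimately have "2 * (g \<bullet> g) = 0"
    by (intro nonneg_quadratic_linear_coeff_eq_0[where b = "f g"]) metis
  then show ?thesis by (simp add: g_def)
qed

lemma Rayleigh_quotient_attains_max:
  fixes W :: "real^'n^'m"
  obtains x where "norm x = 1" "\<And>y. (W *v y) \<bullet> (W *v y) \<le> ((W *v x) \<bullet> (W *v x)) * (y \<bullet> y)"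
proof -
  define q where "q y = (W *v y) \<bullet> (W *v y)" for y :: "real^'n"
  have cont: "continuous_on (sphere 0 1) q"
    unfolding q_def
    by (intro continuous_intros linear_continuous_on linear_linear[THEN iffD1] matrix_vector_mul_linear)
  obtain x where x: "x \<in> sphere 0 1" and max: "\<And>y. y \<in> sphere 0 1 \<Longrightarrow> q y \<le> q x"
    using continuous_attains_sup[OF compact_sphere _ cont] by (auto simp: sphere_eq_empty)
  have "q y \<le> q x * (y \<bullet> y)" for y
  proof (cases "y = 0")
    case True
    then show ?thesis by (simp add: q_def)
  next
    case False
    define c where "c = inverse (norm y)"
    have "q (c *\<^sub>R y) \<le> q x"
      using False max by (simp add: c_def)
    moreover have "q (c *\<^sub>R y) = q y / (y \<bullet> y)"
      by (simp add: q_def c_def matrix_vector_mult_scaleR dot_square_norm power2_eq_square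
          divide_inverse)
    ultimately show ?thesis
      using False by (simp add: divide_le_eq)
  qed
  with x that show ?thesis by (simp add: q_def)
qed

lemma largest_singular_value_sq_Rayleigh:
  fixes W :: "real^'n^'m"
  obtains x where "norm x = 1" "(largest_singular_value W)\<^sup>2 = (W *v x) \<bullet> (W *v x)"
    "\<And>y. (W *v y) \<bullet> (W *v y) \<le> (largest_singular_value W)\<^sup>2 * (y \<bullet> y)"
proof -
  obtain x where x: "norm x = 1"
    and bound: "\<And>y. (W *v y) \<bullet> (W *v y) \<le> ((W *v x) \<bullet> (W *v x)) * (y \<bullet> y)"
    using Rayleigh_quotient_attains_max by blast
  define \<mu> where "\<mu> = (W *v x) \<bullet> (W *v x)"
  define E where "E = {l. mat_eigenvalue (transpose W ** W) l}"
  have xx: "x \<bullet> x = 1"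
    using x by (simp add: dot_square_norm)
  have "(transpose W ** W) *v x = \<mu> *\<^sub>R x"
    using bound xx by (intro Gram_eigenvector_if_attains_bound) (simp_all add: \<mu>_def)
  moreover have "x \<noteq> 0"
    using x by auto
  ultimately have "\<mu> \<in> E"
    unfolding E_def mat_eigenvalue_def by blast
  have E_bound: "0 \<le> l \<and> l \<le> \<mu>" if "l \<in> E" for l
  proof -
    obtain v where "v \<noteq> 0" and v: "l * (v \<bullet> v) = (W *v v) \<bullet> (W *v v)"
      using \<open>l \<in> E\<close> Gram_eigenvalue_eq unfolding E_def mat_eigenvalue_def by blast
    have "0 < v \<bullet> v"
      using \<open>v \<noteq> 0\<close> by simp
    moreover have "l * (v \<bullet> v) \<le> \<mu> * (v \<bullet> v)"
      using v bound[of v] by (simp add: \<mu>_def)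
    moreover have "0 \<le> l * (v \<bullet> v)"
      using v by simp
    ultimately show ?thesis
      by (metis mult_le_cancel_right_pos zero_le_mult_iff not_le)
  qed
  have "largest_singular_value W = sqrt \<mu>"
    unfolding largest_singular_value_def singular_values_def
  proof (rule Max_eqI)
    show "finite {sqrt l |l. mat_eigenvalue (transpose W ** W) l}"
      using finite_eigenvalues_if_symmetric[OF Gram_symmetric[of W]] by (simp add: setcompr_eq_image)
  qed (use \<open>\<mu> \<in> E\<close> E_bound in \<open>auto simp: E_def\<close>)
  with \<open>\<mu> \<in> E\<close> E_bound have sq: "(largest_singular_value W)\<^sup>2 = \<mu>"
    by simp
  show ?thesis
  proof (rule that[OF x])
    show "(largest_singular_value W)\<^sup>2 = (W *v x) \<bullet> (W *v x)"
      unfolding sq \<mu>_def ..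
    show "(W *v y) \<bullet> (W *v y) \<le> (largest_singular_value W)\<^sup>2 * (y \<bullet> y)" for y
      unfolding sq \<mu>_def by (rule bound)
  qed
qed

lemma sum_squared_eq_sum_of_squares_imp_eq:
  fixes z :: "'a \<Rightarrow> real"
  assumes "finite A" and eq: "(\<Sum>k\<in>A. z k)\<^sup>2 = (\<Sum>k\<in>A. (z k)\<^sup>2) * card A"
    and "i \<in> A" "j \<in> A"
  shows "z i = z j"
proof -
  define c where "c = real (card A)"
  define m where "m = (\<Sum>k\<in>A. z k) / c"
  have "c > 0"
    using assms(1,3) card_gt_0_iff by (fastforce simp: c_def)
  have "(\<Sum>k\<in>A. (z k - m)\<^sup>2) = (\<Sum>k\<in>A. (z k)\<^sup>2 - 2 * m * z k + m\<^sup>2)"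
    by (simp add: power2_diff algebra_simps)
  also have "\<dots> = (\<Sum>k\<in>A. (z k)\<^sup>2) - 2 * m * (\<Sum>k\<in>A. z k) + c * m\<^sup>2"
    by (simp add: sum.distrib sum_subtractf sum_distrib_left c_def)
  also have "\<dots> = (\<Sum>k\<in>A. (z k)\<^sup>2) - (\<Sum>k\<in>A. z k)\<^sup>2 / c"
    using \<open>c > 0\<close> by (simp add: m_def power2_eq_square)
  also have "\<dots> = 0"
    using eq \<open>c > 0\<close> by (simp add: c_def)
  finally have "\<forall>k\<in>A. (z k - m)\<^sup>2 = 0"
    by (simp add: sum_nonneg_eq_0_iff[OF assms(1)])
  then show ?thesis
    using assms(3,4) by simp
qed

lemma inner_mult_le_max_row_sum:
  fixes W :: "real^'n^'m"
  assumes nonneg: "\<And>i j. W $ i $ j \<ge> 0"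
    and col_sums: "\<And>j. (\<Sum>i\<in>UNIV. W $ i $ j) = 1"
  shows "(W *v x) \<bullet> (W *v x) \<le> max_row_sum W * (x \<bullet> x)"
proof -
  let ?M = "max_row_sum W"
  have "row_sum W i \<le> ?M" for i
    unfolding max_row_sum_def by (rule Max_ge) auto
  moreover have "0 \<le> (\<Sum>j\<in>UNIV. W$i$j * (x$j)\<^sup>2)" for i
    using nonneg by (simp add: sum_nonneg)
  moreover have "(\<Sum>j\<in>UNIV. W$i$j * x$j)\<^sup>2 \<le> row_sum W i * (\<Sum>j\<in>UNIV. W$i$j * (x$j)\<^sup>2)" for i
  proof -
    have "(\<Sum>j\<in>UNIV. sqrt (W$i$j) * (sqrt (W$i$j) * x$j))\<^sup>2
        \<le> (\<Sum>j\<in>UNIV. (sqrt (W$i$j))\<^sup>2) * (\<Sum>j\<in>UNIV. (sqrt (W$i$j) * x$j)\<^sup>2)"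
      by (rule Cauchy_Schwarz_ineq_sum)
    then show ?thesis
      using nonneg by (simp add: row_sum_def power_mult_distrib mult.assoc[symmetric])
  qed
  ultimately have row: "(\<Sum>j\<in>UNIV. W$i$j * x$j)\<^sup>2 \<le> ?M * (\<Sum>j\<in>UNIV. W$i$j * (x$j)\<^sup>2)" for i
    by (meson mult_right_mono order_trans)
  have "(W *v x) \<bullet> (W *v x) = (\<Sum>i\<in>UNIV. (\<Sum>j\<in>UNIV. W$i$j * x$j)\<^sup>2)"
    by (simp add: inner_vec_def matrix_vector_mult_def power2_eq_square)
  also have "\<dots> \<le> (\<Sum>i\<in>UNIV. ?M * (\<Sum>j\<in>UNIV. W$i$j * (x$j)\<^sup>2))"
    by (intro sum_mono row)
  also have "\<dots> = ?M * (\<Sum>i\<in>UNIV. \<Sum>j\<in>UNIV. W$i$j * (x$j)\<^sup>2)"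
    by (simp add: sum_distrib_left)
  also have "\<dots> = ?M * (\<Sum>j\<in>UNIV. \<Sum>i\<in>UNIV. W$i$j * (x$j)\<^sup>2)"
    by (subst sum.swap) (rule refl)
  also have "\<dots> = ?M * (\<Sum>j\<in>UNIV. (\<Sum>i\<in>UNIV. W$i$j) * (x$j)\<^sup>2)"
    by (simp add: sum_distrib_right)
  also have "\<dots> = ?M * (x \<bullet> x)"
    by (simp add: col_sums inner_vec_def power2_eq_square)
  finally show ?thesis .
qed

lemma sum_row_sum_eq_card:
  fixes W :: "real^'n^'m"
  assumes "\<And>j. (\<Sum>i\<in>UNIV. W $ i $ j) = 1"
  shows "(\<Sum>i\<in>UNIV. row_sum W i) = real CARD('n)"
  unfolding row_sum_def using assms by (subst sum.swap) simp

lemma sum_row_sum_squares_le: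
  fixes W :: "real^'n^'m"
  shows "(\<Sum>i\<in>UNIV. (row_sum W i)\<^sup>2) \<le> (largest_singular_value W)\<^sup>2 * real CARD('n)"
proof -
  define one :: "real^'n" where "one = (\<chi> j. 1)"
  have "W *v one = (\<chi> i. row_sum W i)"
    by (simp add: one_def row_sum_def matrix_vector_mult_def)
  then have "(W *v one) \<bullet> (W *v one) = (\<Sum>i\<in>UNIV. (row_sum W i)\<^sup>2)"
    by (simp add: inner_vec_def power2_eq_square)
  moreover have "one \<bullet> one = real CARD('n)"
    by (simp add: one_def inner_vec_def)
  moreover obtain x where "\<And>y. (W *v y) \<bullet> (W *v y) \<le> (largest_singular_value W)\<^sup>2 * (y \<bullet> y)"
    using largest_singular_value_sq_Rayleigh by blast
  ultimately show ?thesis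
    by metis
qed

lemma card_sq_le_sum_row_sum_squares:
  fixes W :: "real^'n^'m"
  assumes "\<And>j. (\<Sum>i\<in>UNIV. W $ i $ j) = 1"
  shows "(real CARD('n))\<^sup>2 \<le> (\<Sum>i\<in>UNIV. (row_sum W i)\<^sup>2) * real CARD('m)"
  using sum_squared_le_sum_of_squares[of "row_sum W" UNIV] by (simp add: sum_row_sum_eq_card[OF assms])

lemma card_ratio_le_largest_singular_value_sq:
  fixes W :: "real^'n^'m"
  assumes "\<And>j. (\<Sum>i\<in>UNIV. W $ i $ j) = 1"
  shows "real CARD('n) / real CARD('m) \<le> (largest_singular_value W)\<^sup>2"
proof -
  define N where "N = real CARD('n)"
  have "N * N \<le> (\<Sum>i\<in>UNIV. (row_sum W i)\<^sup>2) * real CARD('m)"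
    using card_sq_le_sum_row_sum_squares[OF assms] by (simp add: N_def power2_eq_square)
  also have "\<dots> \<le> N * ((largest_singular_value W)\<^sup>2 * real CARD('m))"
    using sum_row_sum_squares_le[of W] by (simp add: N_def mult_ac)
  finally have "N \<le> (largest_singular_value W)\<^sup>2 * real CARD('m)"
    by (simp add: N_def)
  then show ?thesis
    by (simp add: N_def pos_divide_le_eq)
qed

lemma row_sums_eq_if_largest_singular_value_sq_eq:
  fixes W :: "real^'n^'m"
  assumes "\<And>j. (\<Sum>i\<in>UNIV. W $ i $ j) = 1"
    and "(largest_singular_value W)\<^sup>2 = real CARD('n) / real CARD('m)"
  shows "row_sum W i = row_sum W i'"
proof -
  define N R Z where "N = real CARD('n)" and "R = real CARD('m)"
    and "Z = (\<Sum>i\<in>UNIV. (row_sum W i)\<^sup>2)"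
  have "Z * R \<le> N * N"
    using sum_row_sum_squares_le[of W] assms(2) by (simp add: N_def R_def Z_def field_simps)
  then have "(\<Sum>i\<in>UNIV. row_sum W i)\<^sup>2 = Z * card (UNIV :: 'm set)"
    using card_sq_le_sum_row_sum_squares[OF assms(1)]
    by (simp add: sum_row_sum_eq_card[OF assms(1)] N_def R_def Z_def power2_eq_square)
  then show ?thesis
    unfolding Z_def by (rule sum_squared_eq_sum_of_squares_imp_eq[OF finite_class.finite_UNIV]) simp_all
qed

lemma largest_singular_value_sq_le_max_row_sum:
  fixes W :: "real^'n^'m"
  assumes "\<And>i j. W $ i $ j \<ge> 0"
    and "\<And>j. (\<Sum>i\<in>UNIV. W $ i $ j) = 1"
  shows "(largest_singular_value W)\<^sup>2 \<le> max_row_sum W"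
proof (rule largest_singular_value_sq_Rayleigh)
  fix x :: "real^'n"
  assume "norm x = 1" "(largest_singular_value W)\<^sup>2 = (W *v x) \<bullet> (W *v x)"
  then show ?thesis
    using inner_mult_le_max_row_sum[OF assms, of x] by (simp add: norm_eq_1)
qed

lemma max_row_sum_eq_if_row_sums_eq:
  fixes W :: "real^'n^'m"
  assumes "\<And>j. (\<Sum>i\<in>UNIV. W $ i $ j) = 1"
    and "\<forall>i i'. row_sum W i = row_sum W i'"
  shows "max_row_sum W = real CARD('n) / real CARD('m)"
proof -
  define c where "c = row_sum W undefined"
  have c: "row_sum W i = c" for i
    using assms(2) by (simp only: c_def)
  then have "range (row_sum W) = {c}"
    by auto
  moreover have "real CARD('n) = real CARD('m) * c"
    using sum_row_sum_eq_card[OF assms(1)] by (simp add: c)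
  ultimately show ?thesis
    by (simp add: max_row_sum_def)
qed

theorem proposition7:
  fixes W :: "real^'n^'r"
  assumes dims: "CARD('r) \<le> CARD('n)"
    and nonneg: "\<And>i j. W $ i $ j \<ge> 0"
    and full_rank: "rank W = CARD('r)"
    and col_sums: "\<And>j. (\<Sum>i\<in>UNIV. W $ i $ j) = 1"
  shows "real CARD('n) / real CARD('r) \<le> (largest_singular_value W)\<^sup>2
       \<and> (largest_singular_value W)\<^sup>2 \<le> max_row_sum W
       \<and> ((largest_singular_value W)\<^sup>2 = real CARD('n) / real CARD('r)
            \<longleftrightarrow> (\<forall>i i'. row_sum W i = row_sum W i'))
       \<and> ((largest_singular_value W)\<^sup>2 = real CARD('n) / real CARD('r)
            \<longleftrightarrow> max_row_sum W = real CARD('n) / real CARD('r))"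
proof -
  note lower = card_ratio_le_largest_singular_value_sq[OF col_sums]
  note upper = largest_singular_value_sq_le_max_row_sum[OF nonneg col_sums]
  note row_sums_eq = row_sums_eq_if_largest_singular_value_sq_eq[OF col_sums]
  note max_eq = max_row_sum_eq_if_row_sums_eq[OF col_sums]
  show ?thesis
    using lower upper row_sums_eq max_eq by (smt (verit))
qed

end
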